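(* Let $\alpha=(\alpha_1,\dots,\alpha_k)$ be a composition of $n$ with $k$ parts. The number of Dyck paths of semilength $n$ with ascent composition $\alpha$ is \[\det\left[\binom{j-i+\sum_{\ell=1}^i\alpha_\ell}{j-(i-1)}\right]_{1\le i,j\le k-1}\] (the empty determinant, for $k=1$, being $1$).
   Context: A Dyck path of semilength $n$ is a word in $U,D$ with $n$ letters of each kind such that every prefix has at least as many $U$'s as $D$'s. Writing it uniquely as $U^{\alpha_1}D^{\delta_1}\cdots U^{\alpha_k}D^{\delta_k}$ with all exponents positive, its ascent composition is $(\alpha_1,\dots,\alpha_k)$. Binomial coefficients $\binom{N}{r}$ with $r<0$ are $0$. *)

theory Defs
  imports Main "Jordan_Normal_Form.Determinant"
begin

text \<open>Words in U,D are lists of booleans: True = U, False = D.\<close>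

definition dyck_path :: "nat \<Rightarrow> bool list \<Rightarrow> bool" where
  "dyck_path n w \<longleftrightarrow>
     length (filter id w) = n \<and> length (filter Not w) = n \<and>
     (\<forall>m \<le> length w. length (filter Not (take m w)) \<le> length (filter id (take m w)))"

definition has_ascent_composition :: "bool list \<Rightarrow> nat list \<Rightarrow> bool" where
  "has_ascent_composition w \<alpha> \<longleftrightarrow>
     (\<exists>\<delta>. length \<delta> = length \<alpha> \<and> (\<forall>a \<in> set \<alpha>. 0 < a) \<and> (\<forall>d \<in> set \<delta>. 0 < d) \<and>
          w = concat (map (\<lambda>(a, d). replicate a True @ replicate d False) (zip \<alpha> \<delta>)))"

text \<open>Binomial coefficient with binom_neg0 N r = 0 for r < 0; here N is always >= 1 (since alpha_l >= 1), so nat N is harmless.\<close>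
definition binom_neg0 :: "int \<Rightarrow> int \<Rightarrow> int" where
  "binom_neg0 N r = (if r < 0 then 0 else int (nat N choose nat r))"

text \<open>The (k-1)x(k-1) matrix, entry (i,j) (1-based) = binom_neg0 (j-i+alpha_1+...+alpha_i) (j-(i-1)).
  Jordan_Normal_Form matrices are 0-based, so index i0 corresponds to i = i0+1.\<close>
definition ascent_matrix :: "nat list \<Rightarrow> int mat" where
  "ascent_matrix \<alpha> = mat (length \<alpha> - 1) (length \<alpha> - 1)
     (\<lambda>(i0, j0). let i = int i0 + 1; j = int j0 + 1 in
        binom_neg0 (j - i + int (sum_list (take (i0 + 1) \<alpha>))) (j - (i - 1)))"

end

theory Submission
  imports Defs
begin

(* Writing a path with ascent composition alpha as U^alpha_1 D^delta_1 ... U^alpha_k D^delta_k,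
   it is a Dyck path iff delta_1 + ... + delta_i <= a_i := alpha_1 + ... + alpha_i for all i
   and the delta_i sum to n.  The last descent is then forced, so the paths are counted by
   the sequences (delta_1, ..., delta_(k-1)) of positive integers with partial sums bounded
   by the a_i.
   On the determinant side, the last row of the matrix has only two nonzero entries (a 1 on
   the subdiagonal and the last column).  Replacing the last column by a column further to
   the right gives a family of determinants that is closed under expansion along the last
   row; they equal weighted counts sum_delta binom(|delta| + q - r - 1, q - r) of the
   bounded sequences, and the expansion becomes the hockey-stick identity summed over the
   possible values of the last entry delta_r. *)

section \<open>Sequences with bounded partial sums\<close>

definition bounded_seqs :: "(nat \<Rightarrow> nat) \<Rightarrow> nat \<Rightarrow> nat list set" where
  "bounded_seqs a r = {\<delta>. length \<delta> = r \<and> (\<forall>x\<in>set \<delta>. 0 < x) \<and>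
     (\<forall>i<r. sum_list (take (Suc i) \<delta>) \<le> a (Suc i))}"

lemma bounded_seqs_0: "bounded_seqs a 0 = {[]}"
  unfolding bounded_seqs_def by auto

lemma snoc_in_bounded_seqs_iff:
  "\<delta> @ [x] \<in> bounded_seqs a (Suc r) \<longleftrightarrow>
     \<delta> \<in> bounded_seqs a r \<and> 0 < x \<and> sum_list \<delta> + x \<le> a (Suc r)"
  by (auto simp: bounded_seqs_def All_less_Suc)

lemma bounded_seqs_Suc:
  "bounded_seqs a (Suc r) =
     (\<Union>\<delta>\<in>bounded_seqs a r. (\<lambda>x. \<delta> @ [x]) ` {1..a (Suc r) - sum_list \<delta>})"
proof (rule Set.set_eqI, rule iffI)
  fix \<delta>' assume "\<delta>' \<in> bounded_seqs a (Suc r)"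
  moreover from this obtain \<delta> x where \<delta>': "\<delta>' = \<delta> @ [x]"
    by (auto simp: bounded_seqs_def length_Suc_conv_rev)
  ultimately have "\<delta> \<in> bounded_seqs a r" and "x \<in> {1..a (Suc r) - sum_list \<delta>}"
    by (auto simp: snoc_in_bounded_seqs_iff)
  with \<delta>' show "\<delta>' \<in> (\<Union>\<delta>\<in>bounded_seqs a r. (\<lambda>x. \<delta> @ [x]) ` {1..a (Suc r) - sum_list \<delta>})"
    by blast
qed (auto simp: snoc_in_bounded_seqs_iff)

lemma finite_bounded_seqs: "finite (bounded_seqs a r)"
  by (induction r) (auto simp: bounded_seqs_0 bounded_seqs_Suc)

lemma sum_bounded_seqs_Suc:
  "(\<Sum>\<delta>'\<in>bounded_seqs a (Suc r). f \<delta>') =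
     (\<Sum>\<delta>\<in>bounded_seqs a r. \<Sum>x<a (Suc r) - sum_list \<delta>. f (\<delta> @ [Suc x]))"
proof -
  have "(\<Sum>\<delta>'\<in>bounded_seqs a (Suc r). f \<delta>') =
      (\<Sum>\<delta>\<in>bounded_seqs a r. \<Sum>x\<in>{1..a (Suc r) - sum_list \<delta>}. f (\<delta> @ [x]))"
    unfolding bounded_seqs_Suc
    by (subst sum.UNION_disjoint) (auto simp: finite_bounded_seqs sum.reindex inj_on_def)
  then show ?thesis
    by (simp add: sum.atLeast1_atMost_eq)
qed

lemma bounded_seqs_sum_le: "\<delta> \<in> bounded_seqs a r \<Longrightarrow> sum_list \<delta> \<le> a r"
  by (cases r) (auto simp: bounded_seqs_def)

lemma card_bounded_seqs_Suc_sum_eq: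
  assumes "a r < a (Suc r)"
  shows "card {\<delta> \<in> bounded_seqs a (Suc r). sum_list \<delta> = a (Suc r)} = card (bounded_seqs a r)"
proof -
  have "\<delta> @ [a (Suc r) - sum_list \<delta>] \<in> bounded_seqs a (Suc r)" if "\<delta> \<in> bounded_seqs a r" for \<delta>
    using that assms bounded_seqs_sum_le[OF that] by (simp add: snoc_in_bounded_seqs_iff)
  then have "{\<delta> \<in> bounded_seqs a (Suc r). sum_list \<delta> = a (Suc r)} =
      (\<lambda>\<delta>. \<delta> @ [a (Suc r) - sum_list \<delta>]) ` bounded_seqs a r"
    using assms by (auto simp: bounded_seqs_Suc dest: bounded_seqs_sum_le)
  moreover have "inj_on (\<lambda>\<delta>. \<delta> @ [a (Suc r) - sum_list \<delta>]) (bounded_seqs a r)"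
    by (rule inj_onI) simp
  ultimately show ?thesis
    by (simp add: card_image)
qed

section \<open>A weighted count of bounded sequences\<close>

definition weighted_card :: "(nat \<Rightarrow> nat) \<Rightarrow> nat \<Rightarrow> nat \<Rightarrow> nat" where
  "weighted_card a r q =
     (\<Sum>\<delta>\<in>bounded_seqs a r. (sum_list \<delta> + q - r - 1) choose (q - r))"

lemma weighted_card_diag: "weighted_card a r r = card (bounded_seqs a r)"
  unfolding weighted_card_def by simp

lemma weighted_card_0: "0 < q \<Longrightarrow> weighted_card a 0 q = 0"
  unfolding weighted_card_def by (simp add: bounded_seqs_0)

lemma choose_hockey_stick:
  "(N choose Suc l) + (\<Sum>x<m. (N + x) choose l) = (N + m) choose Suc l"
  by (induction m) simp_all

lemma weighted_card_Suc:
  assumes "mono a" and "r < q"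
  shows "weighted_card a r q + weighted_card a (Suc r) q =
    card (bounded_seqs a r) * ((a (Suc r) + q - Suc r) choose (q - r))"
proof -
  obtain l where q: "q = Suc (r + l)"
    using \<open>r < q\<close> less_imp_Suc_add by blast
  have "weighted_card a r q = (\<Sum>\<delta>\<in>bounded_seqs a r. (sum_list \<delta> + l) choose Suc l)"
    unfolding weighted_card_def q by simp
  moreover have "weighted_card a (Suc r) q =
      (\<Sum>\<delta>\<in>bounded_seqs a r. \<Sum>x<a (Suc r) - sum_list \<delta>. sum_list \<delta> + x + l choose l)"
    unfolding weighted_card_def sum_bounded_seqs_Suc q by (simp add: add.assoc)
  moreover have "(sum_list \<delta> + l choose Suc l) +
      (\<Sum>x<a (Suc r) - sum_list \<delta>. sum_list \<delta> + x + l choose l) = (a (Suc r) + l) choose Suc l"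
    if "\<delta> \<in> bounded_seqs a r" for \<delta>
  proof -
    have "sum_list \<delta> \<le> a (Suc r)"
      using bounded_seqs_sum_le[OF that] \<open>mono a\<close>[THEN monoD, of r "Suc r"] by simp
    then show ?thesis
      using choose_hockey_stick[of "sum_list \<delta> + l" l "a (Suc r) - sum_list \<delta>"]
      by (simp add: ac_simps)
  qed
  ultimately show ?thesis
    by (simp add: q flip: sum.distrib)
qed

section \<open>The determinant\<close>

definition binom_entry :: "(nat \<Rightarrow> nat) \<Rightarrow> nat \<Rightarrow> nat \<Rightarrow> int" where
  "binom_entry a i j = binom_neg0 (int j - int i + int (a (Suc i))) (int j - int i + 1)"

definition binom_matrix :: "(nat \<Rightarrow> nat) \<Rightarrow> nat \<Rightarrow> nat \<Rightarrow> int mat" where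
  "binom_matrix a r p = mat r r (\<lambda>(i, j). binom_entry a i (if j = r - 1 then p else j))"

lemma binom_entry_below: "Suc j < i \<Longrightarrow> binom_entry a i j = 0"
  unfolding binom_entry_def binom_neg0_def by auto

lemma binom_entry_subdiag: "Suc j = i \<Longrightarrow> binom_entry a i j = 1"
  unfolding binom_entry_def binom_neg0_def by auto

lemma binom_entry_upper:
  "i \<le> j \<Longrightarrow> binom_entry a i j = int ((a (Suc i) + j - i) choose (Suc j - i))"
proof -
  assume "i \<le> j"
  then have "nat (int j - int i + int (a (Suc i))) = a (Suc i) + j - i"
    and "nat (int j - int i + 1) = Suc j - i"
    by simp_all
  with \<open>i \<le> j\<close> show ?thesis
    unfolding binom_entry_def binom_neg0_def by simp
qed

lemma det_binom_matrix_1: "det (binom_matrix a (Suc 0) p) = binom_entry a 0 p"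
  by (subst det_single) (auto simp: binom_matrix_def)

lemma det_binom_matrix_Suc:
  assumes "0 < s"
  shows "det (binom_matrix a (Suc s) p) =
    binom_entry a s p * det (binom_matrix a s (s - 1)) - det (binom_matrix a s p)"
proof -
  let ?M = "binom_matrix a (Suc s) p"
  obtain t where s: "s = Suc t"
    using assms gr0_implies_Suc by blast
  have "det ?M = (\<Sum>j<Suc s. ?M $$ (s, j) * cofactor ?M s j)"
    by (rule laplace_expansion_row) (simp_all add: binom_matrix_def)
  also have "\<dots> = ?M $$ (s, t) * cofactor ?M s t + ?M $$ (s, s) * cofactor ?M s s"
    by (simp add: s sum.neutral binom_matrix_def binom_entry_below)
  also have "?M $$ (s, t) = 1"
    by (simp add: binom_matrix_def binom_entry_subdiag s)
  also have "?M $$ (s, s) = binom_entry a s p"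
    by (simp add: binom_matrix_def)
  also have "mat_delete ?M s t = binom_matrix a s p"
    by (rule eq_matI) (auto simp: mat_delete_def binom_matrix_def s)
  then have "cofactor ?M s t = - det (binom_matrix a s p)"
    by (simp add: cofactor_def s)
  also have "mat_delete ?M s s = binom_matrix a s (s - 1)"
    by (rule eq_matI) (auto simp: mat_delete_def binom_matrix_def s)
  then have "cofactor ?M s s = det (binom_matrix a s (s - 1))"
    by (simp add: cofactor_def)
  finally show ?thesis
    by simp
qed

lemma det_binom_matrix:
  assumes "mono a" and "0 < r" and "r \<le> Suc p"
  shows "det (binom_matrix a r p) = int (weighted_card a r (Suc p))"
  using assms(2,3)
proof (induction r arbitrary: p)
  case 0
  then show ?case by simp
next
  case (Suc s)
  then have "s \<le> p" by simp
  then have "binom_entry a s p = int ((a (Suc s) + Suc p - Suc s) choose (Suc p - s))"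
    by (simp add: binom_entry_upper)
  with weighted_card_Suc[OF \<open>mono a\<close>, of s "Suc p"] \<open>s \<le> p\<close>
  have rec: "int (weighted_card a s (Suc p)) + int (weighted_card a (Suc s) (Suc p)) =
      int (card (bounded_seqs a s)) * binom_entry a s p"
    by (metis le_imp_less_Suc of_nat_add of_nat_mult)
  show ?case
  proof (cases "s = 0")
    case True
    then show ?thesis
      using rec by (simp add: det_binom_matrix_1 weighted_card_0 bounded_seqs_0)
  next
    case False
    have "det (binom_matrix a s p) = int (weighted_card a s (Suc p))"
      using Suc.IH[of p] False \<open>s \<le> p\<close> by simp
    moreover have "det (binom_matrix a s (s - 1)) = int (card (bounded_seqs a s))"
      using Suc.IH[of "s - 1"] False by (simp add: weighted_card_diag)
    ultimately show ?thesis
      using rec det_binom_matrix_Suc[of s a p] False by (simp add: mult.commute)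
  qed
qed

lemma det_binom_entries:
  assumes "mono a"
  shows "det (mat r r (\<lambda>(i, j). binom_entry a i j)) = int (card (bounded_seqs a r))"
proof (cases r)
  case 0
  then show ?thesis
    by (simp add: bounded_seqs_0)
next
  case (Suc s)
  then have "mat r r (\<lambda>(i, j). binom_entry a i j) = binom_matrix a r s"
    by (intro eq_matI) (auto simp: binom_matrix_def)
  then show ?thesis
    using det_binom_matrix[OF assms, of r s] Suc by (simp add: weighted_card_diag)
qed

section \<open>Dyck paths with a given ascent composition\<close>

definition blocks :: "nat list \<Rightarrow> nat list \<Rightarrow> bool list" where
  "blocks \<alpha> \<delta> = concat (map (\<lambda>(a, d). replicate a True @ replicate d False) (zip \<alpha> \<delta>))"

lemma blocks_Nil [simp]: "blocks [] \<delta> = []"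
  unfolding blocks_def by simp

lemma blocks_Cons [simp]:
  "blocks (a # \<alpha>) (d # \<delta>) = replicate a True @ replicate d False @ blocks \<alpha> \<delta>"
  unfolding blocks_def by simp

lemma blocks_counts:
  "length \<delta> = length \<alpha> \<Longrightarrow>
     length (filter id (blocks \<alpha> \<delta>)) = sum_list \<alpha> \<and> length (filter Not (blocks \<alpha> \<delta>)) = sum_list \<delta>"
proof (induction \<alpha> arbitrary: \<delta>)
  case Nil
  then show ?case by simp
next
  case (Cons a \<alpha>)
  then show ?case by (cases \<delta>) auto
qed

lemma replicate_False_append_cancel:
  "replicate d1 False @ B1 = replicate d2 False @ B2 \<Longrightarrow> B1 = [] \<or> hd B1 \<Longrightarrow> B2 = [] \<or> hd B2 \<Longrightarrow>
     d1 = d2 \<and> B1 = B2"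
proof (induction d1 arbitrary: d2)
  case 0
  then show ?case by (cases d2) auto
next
  case (Suc d1)
  then show ?case by (cases d2) auto
qed

lemma blocks_empty_or_hd:
  "\<forall>x\<in>set \<alpha>. 0 < x \<Longrightarrow> length \<delta> = length \<alpha> \<Longrightarrow> blocks \<alpha> \<delta> = [] \<or> hd (blocks \<alpha> \<delta>)"
  by (cases \<alpha>; cases \<delta>) (auto simp: hd_append)

lemma blocks_inj:
  "\<forall>x\<in>set \<alpha>. 0 < x \<Longrightarrow> length \<delta>1 = length \<alpha> \<Longrightarrow> length \<delta>2 = length \<alpha> \<Longrightarrow>
     blocks \<alpha> \<delta>1 = blocks \<alpha> \<delta>2 \<Longrightarrow> \<delta>1 = \<delta>2"
proof (induction \<alpha> arbitrary: \<delta>1 \<delta>2)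
  case Nil
  then show ?case by simp
next
  case (Cons a \<alpha>)
  obtain d1 e1 where 1: "\<delta>1 = d1 # e1" "length e1 = length \<alpha>"
    using Cons.prems by (cases \<delta>1) auto
  obtain d2 e2 where 2: "\<delta>2 = d2 # e2" "length e2 = length \<alpha>"
    using Cons.prems by (cases \<delta>2) auto
  have pos: "\<forall>x\<in>set \<alpha>. 0 < x"
    using Cons.prems by simp
  have "replicate d1 False @ blocks \<alpha> e1 = replicate d2 False @ blocks \<alpha> e2"
    using Cons.prems(4) 1 2 by simp
  then have "d1 = d2 \<and> blocks \<alpha> e1 = blocks \<alpha> e2"
    using replicate_False_append_cancel blocks_empty_or_hd[OF pos 1(2)] blocks_empty_or_hd[OF pos 2(2)]
    by blast
  then show ?case
    using Cons.IH[OF pos 1(2) 2(2)] 1 2 by simp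
qed

definition height :: "bool list \<Rightarrow> int" where
  "height w = int (length (filter id w)) - int (length (filter Not w))"

lemma height_append [simp]: "height (u @ v) = height u + height v"
  unfolding height_def by simp

lemma height_replicate [simp]: "height (replicate n b) = (if b then int n else - int n)"
  unfolding height_def by simp

definition nonneg_from :: "int \<Rightarrow> bool list \<Rightarrow> bool" where
  "nonneg_from c w \<longleftrightarrow> (\<forall>m \<le> length w. 0 \<le> c + height (take m w))"

lemma dyck_path_iff_nonneg_from:
  "dyck_path n w \<longleftrightarrow>
     length (filter id w) = n \<and> length (filter Not w) = n \<and> nonneg_from 0 w"
  unfolding dyck_path_def nonneg_from_def height_def by auto

lemma all_take_append_iff:
  "(\<forall>m \<le> length (u @ v). P (take m (u @ v))) \<longleftrightarrow>
     (\<forall>m \<le> length u. P (take m u)) \<and> (\<forall>m \<le> length v. P (u @ take m v))"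
proof
  assume H: "\<forall>m \<le> length (u @ v). P (take m (u @ v))"
  show "(\<forall>m \<le> length u. P (take m u)) \<and> (\<forall>m \<le> length v. P (u @ take m v))"
  proof (intro conjI allI impI)
    fix m assume "m \<le> length u"
    then show "P (take m u)" using H[rule_format, of m] by simp
  next
    fix m assume "m \<le> length v"
    then show "P (u @ take m v)" using H[rule_format, of "length u + m"] by simp
  qed
next
  assume H: "(\<forall>m \<le> length u. P (take m u)) \<and> (\<forall>m \<le> length v. P (u @ take m v))"
  show "\<forall>m \<le> length (u @ v). P (take m (u @ v))"
  proof (intro allI impI)
    fix m assume m: "m \<le> length (u @ v)"
    show "P (take m (u @ v))"
    proof (cases "m \<le> length u")
      case True
      then show ?thesis using H by simp
    next
      case False
      then show ?thesis using H[THEN conjunct2, rule_format, of "m - length u"] m by simp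
    qed
  qed
qed

lemma nonneg_from_append:
  "nonneg_from c (u @ v) \<longleftrightarrow> nonneg_from c u \<and> nonneg_from (c + height u) v"
  unfolding nonneg_from_def using all_take_append_iff[of u v "\<lambda>x. 0 \<le> c + height x"]
  by (simp add: add.assoc)

lemma nonneg_from_Nil: "nonneg_from c [] \<longleftrightarrow> 0 \<le> c"
  unfolding nonneg_from_def height_def by simp

lemma nonneg_from_replicate_True: "nonneg_from c (replicate a True) \<longleftrightarrow> 0 \<le> c"
  unfolding nonneg_from_def by (force simp: take_replicate)

lemma nonneg_from_replicate_False: "nonneg_from c (replicate d False) \<longleftrightarrow> int d \<le> c"
  unfolding nonneg_from_def by (force simp: take_replicate)

lemma nonneg_from_blocks:
  "length \<delta> = length \<alpha> \<Longrightarrow> nonneg_from c (blocks \<alpha> \<delta>) \<longleftrightarrow>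
     0 \<le> c \<and> (\<forall>i<length \<alpha>. int (sum_list (take (Suc i) \<delta>)) \<le> c + int (sum_list (take (Suc i) \<alpha>)))"
proof (induction \<alpha> arbitrary: \<delta> c)
  case Nil
  then show ?case by (simp add: nonneg_from_Nil)
next
  case (Cons a \<alpha>)
  then obtain d \<delta>' where "\<delta> = d # \<delta>'" and "length \<delta>' = length \<alpha>"
    by (cases \<delta>) auto
  with Cons.IH show ?case
    by (auto simp: nonneg_from_append nonneg_from_replicate_True nonneg_from_replicate_False
        All_less_Suc2 algebra_simps)
qed

lemma dyck_path_blocks_iff:
  assumes "length \<delta> = length \<alpha>" and "\<forall>x\<in>set \<delta>. 0 < x"
  shows "dyck_path (sum_list \<alpha>) (blocks \<alpha> \<delta>) \<longleftrightarrow>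
    \<delta> \<in> bounded_seqs (\<lambda>i. sum_list (take i \<alpha>)) (length \<alpha>) \<and> sum_list \<delta> = sum_list \<alpha>"
  using assms
  by (auto simp: dyck_path_iff_nonneg_from blocks_counts nonneg_from_blocks bounded_seqs_def)

lemma dyck_paths_with_ascents_eq_image:
  assumes "\<forall>x\<in>set \<alpha>. 0 < x"
  shows "{w. dyck_path (sum_list \<alpha>) w \<and> has_ascent_composition w \<alpha>} =
    blocks \<alpha> ` {\<delta> \<in> bounded_seqs (\<lambda>i. sum_list (take i \<alpha>)) (length \<alpha>). sum_list \<delta> = sum_list \<alpha>}"
proof -
  have ascents: "has_ascent_composition w \<alpha> \<longleftrightarrow>
      (\<exists>\<delta>. length \<delta> = length \<alpha> \<and> (\<forall>x\<in>set \<delta>. 0 < x) \<and> w = blocks \<alpha> \<delta>)" for w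
    using assms unfolding has_ascent_composition_def blocks_def by blast
  show ?thesis
  proof (rule Set.set_eqI, rule iffI)
    fix w assume "w \<in> {w. dyck_path (sum_list \<alpha>) w \<and> has_ascent_composition w \<alpha>}"
    then obtain \<delta> where "length \<delta> = length \<alpha>" "\<forall>x\<in>set \<delta>. 0 < x" "w = blocks \<alpha> \<delta>"
      and "dyck_path (sum_list \<alpha>) w"
      using ascents by auto
    then show "w \<in> blocks \<alpha> ` {\<delta> \<in> bounded_seqs (\<lambda>i. sum_list (take i \<alpha>)) (length \<alpha>). sum_list \<delta> = sum_list \<alpha>}"
      by (auto simp: dyck_path_blocks_iff)
  next
    fix w assume "w \<in> blocks \<alpha> ` {\<delta> \<in> bounded_seqs (\<lambda>i. sum_list (take i \<alpha>)) (length \<alpha>). sum_list \<delta> = sum_list \<alpha>}"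
    then obtain \<delta> where \<delta>: "\<delta> \<in> bounded_seqs (\<lambda>i. sum_list (take i \<alpha>)) (length \<alpha>)"
      "sum_list \<delta> = sum_list \<alpha>" "w = blocks \<alpha> \<delta>"
      by blast
    moreover from \<delta>(1) have "length \<delta> = length \<alpha>" "\<forall>x\<in>set \<delta>. 0 < x"
      by (simp_all add: bounded_seqs_def)
    ultimately show "w \<in> {w. dyck_path (sum_list \<alpha>) w \<and> has_ascent_composition w \<alpha>}"
      using ascents by (auto simp: dyck_path_blocks_iff)
  qed
qed

lemma mono_sum_list_take: "mono (\<lambda>i. sum_list (take i (xs :: nat list)))"
proof (rule mono_iff_le_Suc[THEN iffD2], rule allI)
  fix i
  show "sum_list (take i xs) \<le> sum_list (take (Suc i) xs)"
    by (cases "i < length xs") (simp_all add: take_Suc_conv_app_nth)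
qed

lemma card_dyck_paths_with_ascents:
  assumes "\<forall>x\<in>set \<alpha>. 0 < x" and "length \<alpha> = Suc r"
  shows "card {w. dyck_path (sum_list \<alpha>) w \<and> has_ascent_composition w \<alpha>} =
    card (bounded_seqs (\<lambda>i. sum_list (take i \<alpha>)) r)"
proof -
  let ?a = "\<lambda>i. sum_list (take i \<alpha>)"
  have "inj_on (blocks \<alpha>) (bounded_seqs ?a (length \<alpha>))"
    using blocks_inj[OF assms(1)] by (auto simp: bounded_seqs_def inj_on_def)
  then have "card {w. dyck_path (sum_list \<alpha>) w \<and> has_ascent_composition w \<alpha>} =
      card {\<delta> \<in> bounded_seqs ?a (Suc r). sum_list \<delta> = ?a (Suc r)}"
    using assms by (simp add: dyck_paths_with_ascents_eq_image card_image inj_on_subset)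
  also have "\<dots> = card (bounded_seqs ?a r)"
  proof (rule card_bounded_seqs_Suc_sum_eq)
    have "?a (Suc r) = ?a r + \<alpha> ! r"
      using assms(2) by (subst take_Suc_conv_app_nth) simp_all
    then show "?a r < ?a (Suc r)"
      using assms nth_mem[of r \<alpha>] by simp
  qed
  finally show ?thesis .
qed

lemma det_ascent_matrix:
  assumes "length \<alpha> = Suc r"
  shows "det (ascent_matrix \<alpha>) = int (card (bounded_seqs (\<lambda>i. sum_list (take i \<alpha>)) r))"
proof -
  have "ascent_matrix \<alpha> = mat r r (\<lambda>(i, j). binom_entry (\<lambda>i. sum_list (take i \<alpha>)) i j)"
    using assms unfolding ascent_matrix_def binom_entry_def Let_def
    by (intro eq_matI) (auto simp: algebra_simps)
  then show ?thesis
    using det_binom_entries[OF mono_sum_list_take] by simp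
qed

theorem lemma4p8:
  fixes \<alpha> :: "nat list" and n k :: nat
  assumes "length \<alpha> = k" and "1 \<le> k"
    and "\<forall>a \<in> set \<alpha>. 0 < a" and "sum_list \<alpha> = n"
  shows "int (card {w. dyck_path n w \<and> has_ascent_composition w \<alpha>}) = det (ascent_matrix \<alpha>)"
proof -
  obtain r where "length \<alpha> = Suc r"
    using assms(1,2) by (cases k) auto
  then show ?thesis
    using card_dyck_paths_with_ascents[OF assms(3)] det_ascent_matrix assms(4) by simp
qed

end
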